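(* Let $\beta\in\mathbb{Z}[\mathrm{i}]$ with $|\beta|>1$, let $(\beta,D)$ be an integral numeration system and let $D'\subset\mathbb{Z}[\mathrm{i}]$ be a finite set with $D\subseteq D'$. Then a configuration $(a_z)_{z\in\mathbb{Z}[\mathrm{i}]}$ is $(\beta,D)$-automatic if and only if it is $(\beta,D')$-automatic, i.e. generated by a DFAO with input alphabet $D'$ that is consistent (any two words over $D'$ with the same value $[\cdot]_\beta$ give the same output).
   Context: For $\gamma\in\mathbb{Z}[\mathrm{i}]$ with $|\gamma|>1$ and a finite $D\subset\mathbb{Z}[\mathrm{i}]$ with $0\in D$, a word $w=w_{n-1}\cdots w_0\in D^*$ has value $[w]_\gamma=\sum_{j=0}^{n-1}w_j\gamma^j$; $w$ is a $(\gamma,D)$-expansion of $z$ if $[w]_\gamma=z$. $(\gamma,D)$ is an integral numeration system if every Gaussian integer has a unique $(\gamma,D)$-expansion (up to leading zeros). A DFAO $(S,D,\delta,s_0,A,\tau)$ has finite state set $S$, input alphabet $D$, transition map $\delta:S\times D\to S$ extended to words by $\delta(s,wa)=\delta(\delta(s,w),a)$, initial state $s_0$, output map $\tau:S\to A$. If every $z\in\mathbb{Z}[\mathrm{i}]$ has at least one $(\gamma,D)$-expansion, a configuration $(a_z)$ (map from $\mathbb{Z}[\mathrm{i}]$ to a finite set) is $(\gamma,D)$-automatic if there is a DFAO with input alphabet $D$ such that $a_z=\tau(\delta(s_0,w))$ for every $w\in D^*$ with $[w]_\gamma=z$. *)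

theory Defs
  imports Complex_Main
begin

definition gint :: "complex \<Rightarrow> bool" where
  "gint z \<longleftrightarrow> Re z \<in> \<int> \<and> Im z \<in> \<int>"

text \<open>A word w = w_{n-1} ... w_0 is the list [w_{n-1}, ..., w_0] (reading order);
its value is sum_j w_j gamma^j.\<close>
definition wval :: "complex \<Rightarrow> complex list \<Rightarrow> complex" where
  "wval \<gamma> w = foldl (\<lambda>acc d. acc * \<gamma> + d) 0 w"

definition numeration_base :: "complex \<Rightarrow> complex set \<Rightarrow> bool" where
  "numeration_base \<gamma> D \<longleftrightarrow> gint \<gamma> \<and> cmod \<gamma> > 1 \<and> finite D \<and> D \<subseteq> {z. gint z} \<and> 0 \<in> D"

definition has_expansions :: "complex \<Rightarrow> complex set \<Rightarrow> bool" where
  "has_expansions \<gamma> D \<longleftrightarrow> (\<forall>z. gint z \<longrightarrow> (\<exists>w\<in>lists D. wval \<gamma> w = z))"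

definition integral_numeration_system :: "complex \<Rightarrow> complex set \<Rightarrow> bool" where
  "integral_numeration_system \<gamma> D \<longleftrightarrow> numeration_base \<gamma> D \<and> has_expansions \<gamma> D \<and>
     (\<forall>w\<in>lists D. \<forall>v\<in>lists D. wval \<gamma> w = wval \<gamma> v \<longrightarrow>
        dropWhile (\<lambda>d. d = 0) w = dropWhile (\<lambda>d. d = 0) v)"

text \<open>Words are read left to
right, delta(s, w a) = delta(delta(s, w), a), i.e. foldl.\<close>
definition is_dfao :: "nat set \<Rightarrow> complex set \<Rightarrow> (nat \<Rightarrow> complex \<Rightarrow> nat) \<Rightarrow> nat \<Rightarrow> bool" where
  "is_dfao S D \<delta> s0 \<longleftrightarrow> finite S \<and> s0 \<in> S \<and> (\<forall>s\<in>S. \<forall>d\<in>D. \<delta> s d \<in> S)"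

definition automatic :: "complex \<Rightarrow> complex set \<Rightarrow> (complex \<Rightarrow> 'a) \<Rightarrow> bool" where
  "automatic \<gamma> D a \<longleftrightarrow> has_expansions \<gamma> D \<and>
     (\<exists>S \<delta> s0 (\<tau> :: nat \<Rightarrow> 'a). is_dfao S D \<delta> s0 \<and>
        (\<forall>w\<in>lists D. a (wval \<gamma> w) = \<tau> (foldl \<delta> s0 w)))"

end

theory Submission
  imports Defs
begin

text \<open>A DFAO over the digit set D is simulated on words u over D' by a subset
construction that guesses, digit by digit, a D-word v of the same length as u and
remembers the DFAO state reached on v together with the carry [u] - [v].  Since a prefix
difference gets multiplied by beta^m while a suffix of length m has value of norm at most
M (|beta|^m - 1) / (|beta| - 1), the carries of a D-expansion of [u], padded with leading
zeros, are Gaussian integers of norm at most 2 M / (|beta| - 1); so only finitely many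
subsets occur.  A pair with carry 0 exhibits a D-word with the same value as u.\<close>

lemma wval_Nil [simp]: "wval b [] = 0"
  unfolding wval_def by simp

lemma wval_snoc: "wval b (x @ [d]) = wval b x * b + d"
  unfolding wval_def by simp

lemma wval_append: "wval b (x @ y) = wval b x * b ^ length y + wval b y"
  by (induction y rule: rev_induct)
    (simp_all add: wval_snoc flip: append_assoc, simp add: algebra_simps)

lemma wval_replicate_zero_append: "wval b (replicate k 0 @ v) = wval b v"
proof -
  have "wval b (replicate k 0) = 0"
    by (induction k) (simp_all add: wval_snoc flip: replicate_append_same)
  then show ?thesis by (simp add: wval_append)
qed

lemma gint_diff: "gint x \<Longrightarrow> gint y \<Longrightarrow> gint (x - y)"
  by (auto simp: gint_def)

lemma gint_wval: "gint b \<Longrightarrow> set w \<subseteq> {z. gint z} \<Longrightarrow> gint (wval b w)"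
  by (induction w rule: rev_induct) (auto simp: wval_snoc gint_def)

lemma finite_gint_cball: "finite {c. gint c \<and> cmod c \<le> R}"
proof -
  let ?N = "\<lceil>R\<rceil>"
  let ?grid = "(\<lambda>(x, y). Complex (of_int x) (of_int y)) ` ({-?N..?N} \<times> {-?N..?N})"
  have "{c. gint c \<and> cmod c \<le> R} \<subseteq> ?grid"
  proof
    fix c assume c: "c \<in> {c. gint c \<and> cmod c \<le> R}"
    then obtain x y where x: "Re c = of_int x" and y: "Im c = of_int y"
      by (auto simp: gint_def elim!: Ints_cases)
    have "\<bar>Re c\<bar> \<le> R" "\<bar>Im c\<bar> \<le> R" using c abs_Re_le_cmod[of c] abs_Im_le_cmod[of c] by auto
    then have "(x, y) \<in> {-?N..?N} \<times> {-?N..?N}" using x y by (auto, linarith+)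
    moreover have "c = Complex (of_int x) (of_int y)" using x y by (simp add: complex_eq_iff)
    ultimately show "c \<in> ?grid" by force
  qed
  then show ?thesis by (rule finite_subset) auto
qed

lemma has_expansions_mono: "has_expansions \<gamma> D \<Longrightarrow> D \<subseteq> D' \<Longrightarrow> has_expansions \<gamma> D'"
  unfolding has_expansions_def by (meson lists_mono subsetD)

lemma has_expansion_of_length_ge:
  assumes "has_expansions \<gamma> D" "0 \<in> D" "gint z"
  obtains v where "v \<in> lists D" "wval \<gamma> v = z" "n \<le> length v"
proof -
  obtain v where "v \<in> lists D" "wval \<gamma> v = z"
    using assms(1,3) unfolding has_expansions_def by blast
  then show thesis
    using assms(2) by (intro that[of "replicate n 0 @ v"]) (auto simp: wval_replicate_zero_append)
qed

lemma norm_wval_le: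
  assumes "cmod b \<ge> 1" "set w \<subseteq> {d. cmod d \<le> M}"
  shows "cmod (wval b w) * (cmod b - 1) \<le> M * (cmod b ^ length w - 1)"
  using assms(2)
proof (induction w rule: rev_induct)
  case Nil then show ?case by simp
next
  case (snoc d x)
  let ?q = "cmod b"
  have IH: "cmod (wval b x) * (?q - 1) \<le> M * (?q ^ length x - 1)" using snoc by auto
  have "cmod (wval b (x @ [d])) \<le> cmod (wval b x) * ?q + M"
    using snoc.prems norm_triangle_ineq[of "wval b x * b" d]
    by (auto simp: wval_snoc norm_mult)
  then have "cmod (wval b (x @ [d])) * (?q - 1) \<le> (cmod (wval b x) * ?q + M) * (?q - 1)"
    using assms(1) by (simp add: mult_right_mono)
  also have "\<dots> = ?q * (cmod (wval b x) * (?q - 1)) + M * (?q - 1)" by (simp add: algebra_simps)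
  also have "\<dots> \<le> ?q * (M * (?q ^ length x - 1)) + M * (?q - 1)"
    using IH assms(1) by (simp add: mult_left_mono)
  also have "\<dots> = M * (?q ^ length (x @ [d]) - 1)" by (simp add: algebra_simps)
  finally show ?case .
qed

lemma norm_prefix_diff_le:
  assumes q: "cmod b > 1" and M: "M \<ge> 0"
    and digits: "set s \<union> set s' \<subseteq> {d. cmod d \<le> M}" and len: "length s = length s'"
    and eq: "wval b (p @ s) = wval b (p' @ s')"
  shows "cmod (wval b p - wval b p') \<le> 2 * M / (cmod b - 1)"
proof -
  let ?q = "cmod b" and ?m = "length s"
  have "(wval b p - wval b p') * b ^ ?m = wval b s' - wval b s"
    using eq len by (simp add: wval_append algebra_simps)
  then have diff: "cmod (wval b p - wval b p') * ?q ^ ?m \<le> cmod (wval b s') + cmod (wval b s)"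
    by (metis norm_mult norm_power norm_triangle_ineq4)
  have "M * (?q ^ ?m - 1) \<le> M * ?q ^ ?m" using M by (simp add: mult_left_mono)
  then have suffixes: "cmod (wval b s) * (?q - 1) \<le> M * ?q ^ ?m"
    "cmod (wval b s') * (?q - 1) \<le> M * ?q ^ ?m"
    using norm_wval_le[of b s M] norm_wval_le[of b s' M] q digits len by auto
  have "cmod (wval b p - wval b p') * (?q - 1) * ?q ^ ?m
      = cmod (wval b p - wval b p') * ?q ^ ?m * (?q - 1)" by (simp add: ac_simps)
  also have "\<dots> \<le> (cmod (wval b s') + cmod (wval b s)) * (?q - 1)"
    using diff q by (intro mult_right_mono) auto
  also have "\<dots> \<le> (2 * M) * ?q ^ ?m"
    using suffixes by (simp add: distrib_right)
  finally have "cmod (wval b p - wval b p') * (?q - 1) * ?q ^ ?m \<le> (2 * M) * ?q ^ ?m" .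
  moreover have "?q ^ ?m > 0" using q by (intro zero_less_power) linarith
  ultimately have "cmod (wval b p - wval b p') * (?q - 1) \<le> 2 * M"
    by (rule mult_right_le_imp_le)
  then show ?thesis using q by (simp add: pos_le_divide_eq)
qed

text \<open>A state of the subset construction is a set of pairs (s, c) of a DFAO state and a
carry in B.  The initial set accounts for the leading part of the D-word that is longer
than the input.\<close>
definition carry_init ::
    "complex \<Rightarrow> complex set \<Rightarrow> complex set \<Rightarrow> (nat \<Rightarrow> complex \<Rightarrow> nat) \<Rightarrow> nat \<Rightarrow> (nat \<times> complex) set"
  where "carry_init \<beta> D B \<delta> s0 = {(foldl \<delta> s0 v, - wval \<beta> v) | v. v \<in> lists D \<and> - wval \<beta> v \<in> B}"

definition carry_step :: "complex \<Rightarrow> complex set \<Rightarrow> complex set \<Rightarrow> (nat \<Rightarrow> complex \<Rightarrow> nat) \<Rightarrow>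
    (nat \<times> complex) set \<Rightarrow> complex \<Rightarrow> (nat \<times> complex) set"
  where "carry_step \<beta> D B \<delta> P d =
    {(\<delta> s e, \<beta> * c + d - e) | s c e. (s, c) \<in> P \<and> e \<in> D \<and> \<beta> * c + d - e \<in> B}"

abbreviation carry_run ::
    "complex \<Rightarrow> complex set \<Rightarrow> complex set \<Rightarrow> (nat \<Rightarrow> complex \<Rightarrow> nat) \<Rightarrow> nat \<Rightarrow> complex list \<Rightarrow> (nat \<times> complex) set"
  where "carry_run \<beta> D B \<delta> s0 u \<equiv> foldl (carry_step \<beta> D B \<delta>) (carry_init \<beta> D B \<delta> s0) u"

lemma carry_stepI:
  "(s, c) \<in> P \<Longrightarrow> e \<in> D \<Longrightarrow> \<beta> * c + d - e \<in> B \<Longrightarrow>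
    (\<delta> s e, \<beta> * c + d - e) \<in> carry_step \<beta> D B \<delta> P d"
  unfolding carry_step_def by blast

lemma carry_run_sound:
  assumes "(s, c) \<in> carry_run \<beta> D B \<delta> s0 u"
  shows "\<exists>v\<in>lists D. s = foldl \<delta> s0 v \<and> c = wval \<beta> u - wval \<beta> v"
  using assms
proof (induction u arbitrary: s c rule: rev_induct)
  case Nil
  then show ?case unfolding carry_init_def by auto
next
  case (snoc d u)
  then obtain s' c' e where "(s', c') \<in> carry_run \<beta> D B \<delta> s0 u" and e: "e \<in> D"
    and s: "s = \<delta> s' e" and c: "c = \<beta> * c' + d - e"
    unfolding carry_step_def by auto
  with snoc.IH obtain v where v: "v \<in> lists D" "s' = foldl \<delta> s0 v" "c' = wval \<beta> u - wval \<beta> v"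
    by blast
  have "c = wval \<beta> (u @ [d]) - wval \<beta> (v @ [e])"
    using c v(3) by (simp add: wval_snoc algebra_simps)
  then show ?case using v e s by (intro bexI[of _ "v @ [e]"]) auto
qed

lemma carry_run_complete:
  assumes "v1 \<in> lists D" "v2 \<in> lists D" "length v2 = length u"
    and "\<And>j. j \<le> length u \<Longrightarrow> wval \<beta> (take j u) - wval \<beta> (v1 @ take j v2) \<in> B"
  shows "(foldl \<delta> s0 (v1 @ v2), wval \<beta> u - wval \<beta> (v1 @ v2)) \<in> carry_run \<beta> D B \<delta> s0 u"
  using assms
proof (induction u arbitrary: v2 rule: rev_induct)
  case Nil
  then have "- wval \<beta> v1 \<in> B" using Nil.prems(4) by fastforce
  with Nil show ?case unfolding carry_init_def by auto
next
  case (snoc d u)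
  obtain v2' e where v2: "v2 = v2' @ [e]"
    using snoc.prems(3) by (cases v2 rule: rev_exhaust) auto
  have e: "e \<in> D" "v2' \<in> lists D" and len: "length v2' = length u"
    using snoc.prems(2,3) v2 by auto
  have "wval \<beta> (take j u) - wval \<beta> (v1 @ take j v2') \<in> B" if "j \<le> length u" for j
    using snoc.prems(4)[of j] that len v2 by simp
  with snoc.IH[OF snoc.prems(1) e(2) len]
  have IH: "(foldl \<delta> s0 (v1 @ v2'), wval \<beta> u - wval \<beta> (v1 @ v2')) \<in> carry_run \<beta> D B \<delta> s0 u" .
  have carry: "\<beta> * (wval \<beta> u - wval \<beta> (v1 @ v2')) + d - e = wval \<beta> (u @ [d]) - wval \<beta> (v1 @ v2)"
    unfolding v2 append_assoc[symmetric] wval_snoc by (simp add: algebra_simps)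
  have "wval \<beta> (u @ [d]) - wval \<beta> (v1 @ v2) \<in> B"
    using snoc.prems(3) snoc.prems(4)[of "length (u @ [d])"] by simp
  from carry_stepI[OF IH e(1) this[folded carry]]
  have "(\<delta> (foldl \<delta> s0 (v1 @ v2')) e, wval \<beta> (u @ [d]) - wval \<beta> (v1 @ v2))
      \<in> carry_step \<beta> D B \<delta> (carry_run \<beta> D B \<delta> s0 u) d"
    unfolding carry .
  moreover have "foldl \<delta> s0 (v1 @ v2) = \<delta> (foldl \<delta> s0 (v1 @ v2')) e" by (simp add: v2)
  ultimately show ?case by simp
qed

lemma carry_init_subset:
  assumes "is_dfao S D \<delta> s0"
  shows "carry_init \<beta> D B \<delta> s0 \<subseteq> S \<times> B"
proof -
  have "foldl \<delta> s v \<in> S" if "s \<in> S" "v \<in> lists D" for s v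
    using that assms by (induction v arbitrary: s) (auto simp: is_dfao_def)
  then show ?thesis using assms by (auto simp: carry_init_def is_dfao_def)
qed

lemma carry_step_subset:
  "is_dfao S D \<delta> s0 \<Longrightarrow> P \<subseteq> S \<times> B \<Longrightarrow> carry_step \<beta> D B \<delta> P d \<subseteq> S \<times> B"
  by (auto simp: carry_step_def is_dfao_def)

lemma carry_run_zero_carry:
  assumes "gint \<beta>" "cmod \<beta> > 1" "has_expansions \<beta> D" "0 \<in> D"
    and "D \<union> D' \<subseteq> {d. gint d \<and> cmod d \<le> M}"
    and "{c. gint c \<and> cmod c \<le> 2 * M / (cmod \<beta> - 1)} \<subseteq> B"
    and u: "u \<in> lists D'"
  shows "\<exists>s. (s, 0) \<in> carry_run \<beta> D B \<delta> s0 u"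
proof -
  have gint_u: "set u \<subseteq> {z. gint z}" using u assms(5) by auto
  obtain v where v: "v \<in> lists D" "wval \<beta> v = wval \<beta> u" "length u \<le> length v"
    using has_expansion_of_length_ge[OF assms(3,4) gint_wval[OF assms(1) gint_u]] by blast
  define v1 where "v1 = take (length v - length u) v"
  define v2 where "v2 = drop (length v - length u) v"
  have v12: "v = v1 @ v2" "length v2 = length u" "v1 \<in> lists D" "v2 \<in> lists D"
    using v by (auto simp: v1_def v2_def dest: in_set_takeD in_set_dropD)
  have M: "M \<ge> 0" using assms(4,5) by force
  have "wval \<beta> (take j u) - wval \<beta> (v1 @ take j v2) \<in> B" if "j \<le> length u" for j
  proof -
    have "gint (wval \<beta> (take j u) - wval \<beta> (v1 @ take j v2))"
      using gint_u v12(3,4) assms(5)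
      by (intro gint_diff gint_wval[OF assms(1)]) (auto dest!: in_set_takeD)
    moreover have "cmod (wval \<beta> (take j u) - wval \<beta> (v1 @ take j v2)) \<le> 2 * M / (cmod \<beta> - 1)"
      using u v12 v(2) assms(5)
      by (intro norm_prefix_diff_le[OF assms(2) M, of "drop j u" "drop j v2"])
        (auto dest!: in_set_dropD)
    ultimately show ?thesis using assms(6) by blast
  qed
  from carry_run_complete[OF v12(3,4,2) this] show ?thesis
    using v(2) v12(1) by auto
qed

lemma dfao_of_finite_automaton:
  fixes \<Delta> :: "'s \<Rightarrow> complex \<Rightarrow> 's" and out :: "'s \<Rightarrow> 'a"
  assumes "finite X" "I \<in> X" "\<And>P d. P \<in> X \<Longrightarrow> d \<in> D \<Longrightarrow> \<Delta> P d \<in> X"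
  shows "\<exists>S \<delta> s0 (\<tau> :: nat \<Rightarrow> 'a). is_dfao S D \<delta> s0 \<and>
           (\<forall>w\<in>lists D. out (foldl \<Delta> I w) = \<tau> (foldl \<delta> s0 w))"
proof -
  obtain f :: "'s \<Rightarrow> nat" where f: "inj_on f X"
    using finite_imp_inj_to_nat_seg[OF assms(1)] by blast
  define g where "g = inv_into X f"
  have gf: "g (f P) = P" if "P \<in> X" for P unfolding g_def using f that by simp
  define \<delta> where "\<delta> = (\<lambda>i d. f (\<Delta> (g i) d))"
  have fold_f: "foldl \<delta> (f P) w = f (foldl \<Delta> P w) \<and> foldl \<Delta> P w \<in> X"
    if "P \<in> X" "w \<in> lists D" for P w
    using that by (induction w arbitrary: P) (auto simp: \<delta>_def gf assms(3))
  have "is_dfao (f ` X) D \<delta> (f I)"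
    unfolding is_dfao_def using assms by (auto simp: \<delta>_def gf)
  moreover have "\<forall>w\<in>lists D. out (foldl \<Delta> I w) = (out \<circ> g) (foldl \<delta> (f I) w)"
    using fold_f assms(2) by (simp add: gf)
  ultimately show ?thesis by blast
qed

lemma automatic_change_digits:
  fixes a :: "complex \<Rightarrow> 'a"
  assumes "gint \<beta>" "cmod \<beta> > 1" "automatic \<beta> D a"
    and D: "finite D" "D \<subseteq> {z. gint z}" "0 \<in> D"
    and D': "finite D'" "D' \<subseteq> {z. gint z}" "has_expansions \<beta> D'"
  shows "automatic \<beta> D' a"
proof -
  obtain S \<delta> s0 and \<tau> :: "nat \<Rightarrow> 'a" where dfao: "is_dfao S D \<delta> s0"
    and out: "\<forall>w\<in>lists D. a (wval \<beta> w) = \<tau> (foldl \<delta> s0 w)"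
    using assms(3) unfolding automatic_def by blast
  define M where "M = (\<Sum>d\<in>D \<union> D'. cmod d)"
  have digits: "D \<union> D' \<subseteq> {d. gint d \<and> cmod d \<le> M}"
    unfolding M_def using D D' by (auto intro: member_le_sum)
  define B where "B = {c. gint c \<and> cmod c \<le> 2 * M / (cmod \<beta> - 1)}"
  let ?run = "carry_run \<beta> D B \<delta> s0"
  have "\<exists>S' \<delta>' s0' (\<tau>' :: nat \<Rightarrow> 'a). is_dfao S' D' \<delta>' s0' \<and>
      (\<forall>w\<in>lists D'. \<tau> (SOME s. (s, 0) \<in> ?run w) = \<tau>' (foldl \<delta>' s0' w))"
  proof (rule dfao_of_finite_automaton[where X = "Pow (S \<times> B)" and \<Delta> = "carry_step \<beta> D B \<delta>"
        and out = "\<lambda>P. \<tau> (SOME s. (s, 0) \<in> P)"])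
    show "finite (Pow (S \<times> B))"
      using dfao finite_gint_cball by (simp add: is_dfao_def B_def)
    show "carry_init \<beta> D B \<delta> s0 \<in> Pow (S \<times> B)"
      using carry_init_subset[OF dfao] by blast
    show "carry_step \<beta> D B \<delta> P d \<in> Pow (S \<times> B)" if "P \<in> Pow (S \<times> B)" for P d
      using carry_step_subset[OF dfao] that by blast
  qed
  then obtain S' \<delta>' s0' and \<tau>' :: "nat \<Rightarrow> 'a" where dfao': "is_dfao S' D' \<delta>' s0'"
    and out': "\<forall>w\<in>lists D'. \<tau> (SOME s. (s, 0) \<in> ?run w) = \<tau>' (foldl \<delta>' s0' w)"
    by blast
  have "a (wval \<beta> u) = \<tau> (SOME s. (s, 0) \<in> ?run u)" if u: "u \<in> lists D'" for u
  proof -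
    have "(SOME s. (s, 0) \<in> ?run u, 0) \<in> ?run u"
      using carry_run_zero_carry[OF assms(1,2) _ D(3) digits _ u] assms(3)
      by (auto simp: B_def automatic_def intro: someI_ex)
    then show ?thesis using carry_run_sound out by fastforce
  qed
  with dfao' out' D'(3) show ?thesis unfolding automatic_def by auto
qed

lemma automatic_subset_digits:
  assumes "automatic \<gamma> D' a" "D \<subseteq> D'" "has_expansions \<gamma> D"
  shows "automatic \<gamma> D a"
proof -
  obtain S \<delta> s0 \<tau> where "is_dfao S D' \<delta> s0" "\<forall>w\<in>lists D'. a (wval \<gamma> w) = \<tau> (foldl \<delta> s0 w)"
    using assms(1) unfolding automatic_def by blast
  moreover have "lists D \<subseteq> lists D'" using assms(2) by blast
  ultimately have "is_dfao S D \<delta> s0 \<and> (\<forall>w\<in>lists D. a (wval \<gamma> w) = \<tau> (foldl \<delta> s0 w))"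
    using assms(2) unfolding is_dfao_def by blast
  then show ?thesis using assms(3) unfolding automatic_def by blast
qed

theorem proposition2p7:
  fixes \<beta> :: complex and D D' :: "complex set" and a :: "complex \<Rightarrow> 'a"
  assumes "gint \<beta>" and "cmod \<beta> > 1"
    and "integral_numeration_system \<beta> D"
    and "finite D'" and "D' \<subseteq> {z. gint z}" and "D \<subseteq> D'"
    and "finite (a ` {z. gint z})"
  shows "automatic \<beta> D a \<longleftrightarrow> automatic \<beta> D' a"
proof -
  have D: "finite D" "D \<subseteq> {z. gint z}" "0 \<in> D" and exp: "has_expansions \<beta> D"
    using assms(3) by (auto simp: integral_numeration_system_def numeration_base_def)
  have "has_expansions \<beta> D'" using has_expansions_mono[OF exp assms(6)] .
  then show ?thesis
    using automatic_change_digits[OF assms(1,2) _ D assms(4,5)]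
      automatic_subset_digits[OF _ assms(6) exp] by blast
qed

end
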